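(* Let $\sigma=\{\sigma_n\}$ and $\omega=\{\omega_n\}$ be quantum sources on the same sequence of finite-dimensional Hilbert spaces, $t\in(0,1)$, and $\rho_n=t\sigma_n+(1-t)\omega_n$. Then the strong converse rate of $\rho$ is \[ \mathcal{R}^*=\underline{S}(\rho)=\min\big[\underline{S}(\sigma),\underline{S}(\omega)\big]. \]
   Context: For self-adjoint $A=\sum_i\lambda_i|i\rangle\langle i|$, $\{A\ge0\}:=\sum_{\lambda_i\ge0}|i\rangle\langle i|$ and $\{A\ge B\}:=\{A-B\ge0\}$. For a source $\tau=\{\tau_n\}$, the spectral inf-entropy rate is $\underline{S}(\tau)=\sup\{\gamma:\ \limsup_n\mathrm{Tr}[\{\tau_n\ge e^{-n\gamma}I_n\}(\tau_n-e^{-n\gamma}I_n)]=0\}$ (natural logarithms). The strong converse rate $\mathcal{R}^*$ of a source is the supremum of rates $R$ such that every compression scheme of rate $R$ has entanglement fidelity tending to $0$; it equals $\underline{S}$ of the source. *)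

theory Defs
  imports "Jordan_Normal_Form.Schur_Decomposition" "HOL-Library.Extended_Real" "HOL-Library.Liminf_Limsup"
begin

definition hermitian_mat :: "nat \<Rightarrow> complex mat \<Rightarrow> bool" where
  "hermitian_mat n A \<longleftrightarrow> A \<in> carrier_mat n n \<and> mat_adjoint A = A"

definition unitary_mat :: "nat \<Rightarrow> complex mat \<Rightarrow> bool" where
  "unitary_mat n U \<longleftrightarrow> U \<in> carrier_mat n n \<and> U * mat_adjoint U = 1\<^sub>m n \<and> mat_adjoint U * U = 1\<^sub>m n"

definition psd_mat :: "nat \<Rightarrow> complex mat \<Rightarrow> bool" where
  "psd_mat n A \<longleftrightarrow> hermitian_mat n A \<and>
     (\<forall>v \<in> carrier_vec n. 0 \<le> Re (conjugate v \<bullet> (A *\<^sub>v v)))"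

definition mat_trace :: "complex mat \<Rightarrow> complex" where
  "mat_trace A = (\<Sum>i<dim_row A. A $$ (i,i))"

definition density_mat :: "nat \<Rightarrow> complex mat \<Rightarrow> bool" where
  "density_mat n A \<longleftrightarrow> psd_mat n A \<and> mat_trace A = 1"

definition quantum_source :: "(nat \<Rightarrow> nat) \<Rightarrow> (nat \<Rightarrow> complex mat) \<Rightarrow> bool" where
  "quantum_source d \<tau> \<longleftrightarrow> (\<forall>n. density_mat (d n) (\<tau> n))"

text \<open>For self-adjoint A = sum_i lambda_i |i><i| (spectral decomposition A = U D U^*),
  the projection {A \<ge> 0} = sum over lambda_i \<ge> 0 of |i><i|.\<close>
definition nonneg_proj :: "nat \<Rightarrow> complex mat \<Rightarrow> complex mat" where
  "nonneg_proj n A = (SOME P. \<exists>U lam. unitary_mat n U \<and>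
      A = U * mat_diag n (\<lambda>i. complex_of_real (lam i)) * mat_adjoint U \<and>
      P = U * mat_diag n (\<lambda>i. if lam i \<ge> 0 then 1 else 0) * mat_adjoint U)"

definition tail_trace :: "nat \<Rightarrow> complex mat \<Rightarrow> real \<Rightarrow> real" where
  "tail_trace n A c = Re (mat_trace (nonneg_proj n (A - complex_of_real c \<cdot>\<^sub>m 1\<^sub>m n) *
                                  (A - complex_of_real c \<cdot>\<^sub>m 1\<^sub>m n)))"

text \<open>Spectral inf-entropy rate (natural logarithms); valued in extended reals.\<close>
definition spectral_inf_entropy_rate :: "(nat \<Rightarrow> nat) \<Rightarrow> (nat \<Rightarrow> complex mat) \<Rightarrow> ereal" where
  "spectral_inf_entropy_rate d \<tau> =
     Sup {ereal \<gamma> | \<gamma>. limsup (\<lambda>n. ereal (tail_trace (d n) (\<tau> n) (exp (- real n * \<gamma>)))) = 0}"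

end

theory Submission
  imports Defs "Jordan_Normal_Form.Spectral_Radius"
begin

text \<open>Call \<open>\<gamma>\<close> admissible for a source \<open>\<tau>\<close> if \<open>Tr[{\<tau>\<^sub>n \<ge> c\<^sub>n}(\<tau>\<^sub>n - c\<^sub>n)] \<longrightarrow> 0\<close> for
  \<open>c\<^sub>n = exp(-n\<gamma>)\<close>; as these tails are nonnegative, \<open>S(\<tau>)\<close> is the supremum of the admissible
  rates. By the spectral theorem, \<open>{A \<ge> c}\<close> maximises \<open>Q \<mapsto> Re Tr[Q (A - c)]\<close> over all
  \<open>0 \<le> Q \<le> I\<close>. Hence the tail is convex in \<open>A\<close>, and every rate admissible for both \<open>\<sigma>\<close> and
  \<open>\<omega>\<close> is admissible for \<open>\<rho>\<close>. Conversely, testing \<open>\<rho>\<^sub>n - c\<close> against \<open>{\<sigma>\<^sub>n \<ge> c/t}\<close> and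
  using \<open>\<omega>\<^sub>n \<ge> 0\<close> gives \<open>t Tr[{\<sigma>\<^sub>n \<ge> c/t}(\<sigma>\<^sub>n - c/t)] \<le> Tr[{\<rho>\<^sub>n \<ge> c}(\<rho>\<^sub>n - c)]\<close>. The tail is
  antitone in \<open>c\<close> and \<open>exp(-n\<gamma>)/t \<le> exp(-n\<gamma>')\<close> eventually when \<open>\<gamma>' < \<gamma>\<close>, so every rate strictly
  below one admissible for \<open>\<rho>\<close> is admissible for \<open>\<sigma>\<close>, and likewise for \<open>\<omega>\<close>. Sets of admissible
  rates are down-closed, so the supremum over their intersection is the minimum of the suprema.\<close>

section \<open>Adjoints, Hermitian and unitary matrices\<close>

lemma cnj_mult_self: "cnj z * z = complex_of_real ((cmod z)\<^sup>2)" "z * cnj z = complex_of_real ((cmod z)\<^sup>2)"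
  using complex_norm_square[of z] by (simp_all add: mult.commute)

lemma square_mult_carrier_mat:
  "A \<in> carrier_mat n n \<Longrightarrow> B \<in> carrier_mat n n \<Longrightarrow> A * B \<in> carrier_mat n n"
  by auto

lemma mat_adjoint_dim [simp]:
  "dim_row (mat_adjoint A) = dim_col A" "dim_col (mat_adjoint A) = dim_row A"
  unfolding mat_adjoint_def by auto

lemma mat_adjoint_index [simp]:
  "i < dim_col A \<Longrightarrow> j < dim_row A \<Longrightarrow> mat_adjoint A $$ (i, j) = conjugate (A $$ (j, i))"
  unfolding mat_adjoint_def by (auto simp: mat_of_rows_def)

lemma mat_adjoint_carrier [simp]: "A \<in> carrier_mat n m \<Longrightarrow> mat_adjoint A \<in> carrier_mat m n"
  unfolding carrier_mat_def by auto

lemma mat_adjoint_adjoint [simp]: "mat_adjoint (mat_adjoint A) = (A :: complex mat)"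
  by (rule eq_matI) auto

lemma mat_adjoint_one [simp]: "mat_adjoint (1\<^sub>m n) = (1\<^sub>m n :: complex mat)"
  by (rule eq_matI) auto

lemma mat_adjoint_mult:
  fixes A B :: "complex mat"
  assumes "A \<in> carrier_mat n k" "B \<in> carrier_mat k m"
  shows "mat_adjoint (A * B) = mat_adjoint B * mat_adjoint A"
  by (rule eq_matI, insert assms, auto simp: scalar_prod_def intro!: sum.cong)

text \<open>The entrywise symmetry is oriented so that it can be used as a terminating rewrite rule.\<close>

lemma hermitian_matI:
  assumes "A \<in> carrier_mat n n" "\<And>i j. i < n \<Longrightarrow> j < n \<Longrightarrow> cnj (A $$ (j, i)) = A $$ (i, j)"
  shows "hermitian_mat n A"
  unfolding hermitian_mat_def
proof (intro conjI assms(1) eq_matI)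
  fix i j assume "i < dim_row A" "j < dim_col A"
  then have "i < n" "j < n" using assms(1) by auto
  then show "mat_adjoint A $$ (i, j) = A $$ (i, j)" using assms(1) assms(2)[of i j] by simp
qed (use assms(1) in auto)

lemma hermitian_matD:
  assumes "hermitian_mat n A"
  shows "A \<in> carrier_mat n n" "\<And>i j. i < n \<Longrightarrow> j < n \<Longrightarrow> cnj (A $$ (j, i)) = A $$ (i, j)"
proof -
  have A: "A \<in> carrier_mat n n" and adj: "mat_adjoint A = A"
    using assms unfolding hermitian_mat_def by auto
  show "A \<in> carrier_mat n n" by (fact A)
  show "cnj (A $$ (j, i)) = A $$ (i, j)" if "i < n" "j < n" for i j
  proof -
    have "mat_adjoint A $$ (i, j) = cnj (A $$ (j, i))" using A that by simp
    then show ?thesis unfolding adj by (rule sym)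
  qed
qed

lemma hermitian_mat_real_combination:
  assumes "hermitian_mat n X" "hermitian_mat n Y"
  shows "hermitian_mat n (complex_of_real a \<cdot>\<^sub>m X + complex_of_real b \<cdot>\<^sub>m Y)"
  using hermitian_matD[OF assms(1)] hermitian_matD[OF assms(2)] by (intro hermitian_matI) auto

lemma hermitian_mat_shift:
  assumes "hermitian_mat n A"
  shows "hermitian_mat n (A - complex_of_real c \<cdot>\<^sub>m 1\<^sub>m n)"
  using hermitian_matD[OF assms] by (intro hermitian_matI) auto

lemma hermitian_mat_unitary_conj:
  fixes A W :: "complex mat"
  assumes A: "hermitian_mat n A" and W: "W \<in> carrier_mat n n"
  shows "hermitian_mat n (mat_adjoint W * A * W)"
proof -
  have Ac: "A \<in> carrier_mat n n" and A_adj: "mat_adjoint A = A"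
    using A unfolding hermitian_mat_def by auto
  have "mat_adjoint (mat_adjoint W * A) = A * W"
    using Ac W A_adj by (subst mat_adjoint_mult[of _ n n]) auto
  then have "mat_adjoint (mat_adjoint W * A * W) = mat_adjoint W * (A * W)"
    using Ac W by (subst mat_adjoint_mult[of _ n n]) auto
  also have "\<dots> = mat_adjoint W * A * W"
    using Ac W by (simp add: assoc_mult_mat[of _ n n _ n _ n] square_mult_carrier_mat)
  finally show ?thesis using Ac W unfolding hermitian_mat_def by auto
qed

lemma psd_mat_one: "psd_mat n (1\<^sub>m n)"
  unfolding psd_mat_def hermitian_mat_def
proof (intro conjI ballI)
  fix v :: "complex vec" assume v: "v \<in> carrier_vec n"
  have "conjugate v \<bullet> (1\<^sub>m n *\<^sub>v v) = (\<Sum>i<n. complex_of_real ((cmod (v $ i))\<^sup>2))"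
    using v by (auto simp: scalar_prod_def atLeast0LessThan cnj_mult_self intro!: sum.cong)
  then show "0 \<le> Re (conjugate v \<bullet> (1\<^sub>m n *\<^sub>v v))" by (simp add: sum_nonneg)
qed auto

lemma unitary_mat_carrier: "unitary_mat n U \<Longrightarrow> U \<in> carrier_mat n n"
  unfolding unitary_mat_def by auto

lemma unitary_mat_one: "unitary_mat n (1\<^sub>m n)"
  unfolding unitary_mat_def by auto

lemma unitary_mat_adjoint: "unitary_mat n U \<Longrightarrow> unitary_mat n (mat_adjoint U)"
  unfolding unitary_mat_def by auto

lemma unitary_mat_mult:
  fixes U V :: "complex mat"
  assumes U: "unitary_mat n U" and V: "unitary_mat n V"
  shows "unitary_mat n (U * V)"
proof -
  have [simp]: "U \<in> carrier_mat n n" "V \<in> carrier_mat n n"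
    using U V unitary_mat_carrier by auto
  have "U * V * mat_adjoint (U * V) = U * (V * mat_adjoint V) * mat_adjoint U"
    "mat_adjoint (U * V) * (U * V) = mat_adjoint V * (mat_adjoint U * U) * V"
    by (simp_all add: mat_adjoint_mult[of _ n n _ n] assoc_mult_mat[of _ n n _ n _ n] square_mult_carrier_mat)
  then show ?thesis
    using U V unfolding unitary_mat_def
    by (simp add: square_mult_carrier_mat right_mult_one_mat[of _ n n] left_mult_one_mat[of _ n n])
qed

lemma unitary_mat_conj_cancel:
  fixes U D :: "complex mat"
  assumes U: "unitary_mat n U" and D: "D \<in> carrier_mat n n"
  shows "mat_adjoint U * (U * D * mat_adjoint U) * U = D"
    and "U * (mat_adjoint U * D * U) * mat_adjoint U = D"
proof -
  have [simp]: "U \<in> carrier_mat n n" using U unitary_mat_carrier by auto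
  have "mat_adjoint U * (U * D * mat_adjoint U) * U = (mat_adjoint U * U) * D * (mat_adjoint U * U)"
    "U * (mat_adjoint U * D * U) * mat_adjoint U = (U * mat_adjoint U) * D * (U * mat_adjoint U)"
    using D by (simp_all add: assoc_mult_mat[of _ n n _ n _ n] square_mult_carrier_mat)
  then show "mat_adjoint U * (U * D * mat_adjoint U) * U = D"
    and "U * (mat_adjoint U * D * U) * mat_adjoint U = D"
    using U D unfolding unitary_mat_def by (simp_all add: right_mult_one_mat left_mult_one_mat)
qed

lemma unitary_mat_col_norm:
  assumes U: "unitary_mat n U" and i: "i < n"
  shows "(\<Sum>j<n. (cmod (U $$ (j, i)))\<^sup>2) = 1"
proof -
  have Uc: "U \<in> carrier_mat n n" using U unitary_mat_carrier by auto
  have "complex_of_real (\<Sum>j<n. (cmod (U $$ (j, i)))\<^sup>2) = (mat_adjoint U * U) $$ (i, i)"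
    using Uc i by (auto simp: scalar_prod_def atLeast0LessThan cnj_mult_self
        intro!: sum.cong)
  also have "\<dots> = 1" using U i unfolding unitary_mat_def by simp
  finally show ?thesis by (simp only: of_real_eq_1_iff)
qed

lemma mat_adjoint_block_diag:
  fixes U :: "complex mat"
  assumes "U \<in> carrier_mat m m"
  shows "mat_adjoint (four_block_mat (1\<^sub>m 1) (0\<^sub>m 1 m) (0\<^sub>m m 1) U)
       = four_block_mat (1\<^sub>m 1) (0\<^sub>m 1 m) (0\<^sub>m m 1) (mat_adjoint U)"
  using carrier_matD[OF assms] by (intro eq_matI) auto

lemma unitary_mat_block_diag:
  assumes U: "unitary_mat m U"
  shows "unitary_mat (Suc m) (four_block_mat (1\<^sub>m 1) (0\<^sub>m 1 m) (0\<^sub>m m 1) U)"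
proof -
  have Uc: "U \<in> carrier_mat m m" using U unitary_mat_carrier by auto
  show ?thesis
    unfolding unitary_mat_def mat_adjoint_block_diag[OF Uc] using U Uc unfolding unitary_mat_def
    by (auto simp: mult_four_block_mat[of _ 1 1 _ m _ m _ _ 1 _ m])
qed

lemma unitary_mat_of_corthogonal:
  fixes ws :: "complex vec list"
  assumes ws: "set ws \<subseteq> carrier_vec n" "corthogonal ws" "length ws = n"
  shows "\<exists>W c. unitary_mat n W \<and> (\<forall>j<n. col W j = c j \<cdot>\<^sub>v ws ! j)"
proof -
  define nsq where "nsq j = (\<Sum>i<n. (cmod (ws ! j $ i))\<^sup>2)" for j
  define nr where "nr j = sqrt (nsq j)" for j
  have wsj: "j < n \<Longrightarrow> ws ! j \<in> carrier_vec n" for j using ws by auto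
  have self: "ws ! j \<bullet>c ws ! j = complex_of_real (nsq j)" if j: "j < n" for j
    using wsj[OF j] unfolding nsq_def of_real_sum
    by (auto simp: scalar_prod_def atLeast0LessThan cnj_mult_self intro!: sum.cong)
  have "nsq j \<noteq> 0" if j: "j < n" for j
    using corthogonalD[OF ws(2), of j j] ws(3) self[OF j] j by auto
  then have nr_pos: "nr j > 0" if "j < n" for j
    using that unfolding nr_def nsq_def by (auto simp: less_le sum_nonneg)
  have "nr j * nr j = nsq j" for j unfolding nr_def nsq_def by (simp add: sum_nonneg)
  then have nr_sq: "complex_of_real (nr j) * complex_of_real (nr j) = complex_of_real (nsq j)" for j
    by (metis of_real_mult)
  define W where "W = mat n n (\<lambda>(i, j). ws ! j $ i / complex_of_real (nr j))"
  have W: "W \<in> carrier_mat n n" unfolding W_def by auto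
  have WW: "mat_adjoint W * W = 1\<^sub>m n"
  proof (rule eq_matI)
    fix i j assume "i < dim_row (1\<^sub>m n :: complex mat)" "j < dim_col (1\<^sub>m n :: complex mat)"
    then have i: "i < n" and j: "j < n" by auto
    have "(mat_adjoint W * W) $$ (i, j)
        = (ws ! j \<bullet>c ws ! i) / (complex_of_real (nr i) * complex_of_real (nr j))"
      using i j W wsj[OF i] wsj[OF j] unfolding W_def
      by (auto simp: scalar_prod_def atLeast0LessThan sum_divide_distrib intro!: sum.cong)
    then show "(mat_adjoint W * W) $$ (i, j) = 1\<^sub>m n $$ (i, j)"
      using i j self[of i] corthogonalD[OF ws(2), of j i] ws(3) nr_pos[of i] nr_sq[of i]
      by auto
  qed (use W in auto)
  then have "W * mat_adjoint W = 1\<^sub>m n"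
    using mat_mult_left_right_inverse[OF _ W] W by auto
  moreover have "col W j = (1 / complex_of_real (nr j)) \<cdot>\<^sub>v ws ! j" if "j < n" for j
    using wsj[OF that] that unfolding W_def by (intro eq_vecI) auto
  ultimately show ?thesis using W WW unfolding unitary_mat_def
    by (intro exI[of _ W] exI[of _ "\<lambda>j. 1 / complex_of_real (nr j)"]) auto
qed

lemma unitary_mat_first_col_exists:
  fixes v :: "complex vec"
  assumes v: "v \<in> carrier_vec n" and v0: "v \<noteq> 0\<^sub>v n" and n: "0 < n"
  shows "\<exists>W c. unitary_mat n W \<and> col W 0 = c \<cdot>\<^sub>v v"
proof -
  interpret cof_vec_space n "TYPE(complex)" .
  define b where "b = basis_completion v"
  from basis_completion[OF v v0, folded b_def]
  have b: "distinct b" "\<not> lin_dep (set b)" "set b \<subseteq> carrier_vec n" "hd b = v" "length b = n"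
    by auto
  then obtain vs where bv: "b = v # vs" using n by (cases b) auto
  define ws where "ws = gram_schmidt n b"
  from gram_schmidt_result[OF b(3,1,2) refl, folded ws_def]
  have ws: "set ws \<subseteq> carrier_vec n" "corthogonal ws" "length ws = n"
    by (auto simp: b(5))
  have "ws ! 0 = v"
    using gram_schmidt_hd[OF v, of vs] ws(3) n unfolding ws_def bv by (cases "gram_schmidt n (v # vs)") auto
  then show ?thesis using unitary_mat_of_corthogonal[OF ws] n by metis
qed

text \<open>The eigenvalue \<open>e\<close> is real because \<open>W\<^sup>* A W\<close> is again Hermitian and has first column
  \<open>e \<cdot> e\<^sub>0\<close>.\<close>

lemma hermitian_mat_deflation:
  fixes A W :: "complex mat"
  assumes A: "hermitian_mat (Suc m) A" and W: "unitary_mat (Suc m) W"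
    and v: "v \<in> carrier_vec (Suc m)" and Av: "A *\<^sub>v v = e \<cdot>\<^sub>v v" and colW: "col W 0 = c \<cdot>\<^sub>v v"
  shows "\<exists>r A3. hermitian_mat m A3 \<and>
    mat_adjoint W * A * W = four_block_mat (mat 1 1 (\<lambda>_. complex_of_real r)) (0\<^sub>m 1 m) (0\<^sub>m m 1) A3"
proof -
  have Ac: "A \<in> carrier_mat (Suc m) (Suc m)" using hermitian_matD[OF A] by simp
  have Wc: "W \<in> carrier_mat (Suc m) (Suc m)" and WW: "mat_adjoint W * W = 1\<^sub>m (Suc m)"
    using W unfolding unitary_mat_def by auto
  have W0: "col W 0 \<in> carrier_vec (Suc m)" using col_dim[of W] Wc by simp
  define A' where "A' = mat_adjoint W * A * W"
  have A': "hermitian_mat (Suc m) A'" unfolding A'_def by (rule hermitian_mat_unitary_conj[OF A Wc])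
  have AW0: "A *\<^sub>v col W 0 = e \<cdot>\<^sub>v col W 0"
    unfolding colW using Ac v Av by (simp add: mult_mat_vec smult_smult_assoc mult.commute)
  have "col A' 0 = (mat_adjoint W * A) *\<^sub>v col W 0"
    unfolding A'_def using Ac Wc by (intro col_mult2) auto
  also have "\<dots> = mat_adjoint W *\<^sub>v (A *\<^sub>v col W 0)"
    using Ac Wc W0 by (intro assoc_mult_mat_vec) auto
  also have "\<dots> = e \<cdot>\<^sub>v (mat_adjoint W *\<^sub>v col W 0)"
    unfolding AW0 by (rule mult_mat_vec[of _ "Suc m" "Suc m"]) (use Wc W0 in auto)
  also have "mat_adjoint W *\<^sub>v col W 0 = col (mat_adjoint W * W) 0"
    by (rule col_mult2[symmetric, of _ "Suc m" "Suc m"]) (use Wc in auto)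
  finally have col0: "col A' 0 = e \<cdot>\<^sub>v unit_vec (Suc m) 0" unfolding WW by simp
  have A'i0: "A' $$ (i, 0) = (if i = 0 then e else 0)" if "i < Suc m" for i
    using arg_cong[OF col0, of "\<lambda>x. x $ i"] hermitian_matD(1)[OF A'] that by auto
  have A'0j: "A' $$ (0, j) = (if j = 0 then cnj e else 0)" if "j < Suc m" for j
  proof -
    have "A' $$ (0, j) = cnj (A' $$ (j, 0))" using hermitian_matD(2)[OF A' _ that, of 0] by simp
    then show ?thesis using A'i0[OF that] by simp
  qed
  have e_cnj: "cnj e = e" using A'i0[of 0] A'0j[of 0] by simp
  then have e_real: "e = complex_of_real (Re e)" by (metis Reals_cnj_iff of_real_Re)
  define A3 where "A3 = mat m m (\<lambda>(i, j). A' $$ (Suc i, Suc j))"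
  have "hermitian_mat m A3"
    using hermitian_matD(2)[OF A'] unfolding A3_def by (intro hermitian_matI) auto
  moreover have "A' = four_block_mat (mat 1 1 (\<lambda>_. complex_of_real (Re e))) (0\<^sub>m 1 m) (0\<^sub>m m 1) A3"
    using hermitian_matD(1)[OF A'] A'i0 A'0j e_real e_cnj unfolding A3_def
    by (intro eq_matI) (auto simp: not_less0)
  ultimately show ?thesis unfolding A'_def by blast
qed

lemma four_block_mat_unitary_diag:
  fixes U :: "complex mat"
  assumes U: "unitary_mat m U"
  defines "V \<equiv> four_block_mat (1\<^sub>m 1) (0\<^sub>m 1 m) (0\<^sub>m m 1) U"
  shows "four_block_mat (mat 1 1 (\<lambda>_. complex_of_real r)) (0\<^sub>m 1 m) (0\<^sub>m m 1)
           (U * mat_diag m (\<lambda>i. complex_of_real (lam i)) * mat_adjoint U)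
       = V * mat_diag (Suc m) (\<lambda>i. complex_of_real (if i = 0 then r else lam (i - 1))) * mat_adjoint V"
proof -
  define E where "E = mat 1 1 (\<lambda>_. complex_of_real r)"
  define D where "D = mat_diag m (\<lambda>i. complex_of_real (lam i))"
  have Uc: "U \<in> carrier_mat m m" using U unitary_mat_carrier by auto
  have blocks: "U \<in> carrier_mat m m" "E \<in> carrier_mat 1 1" "D \<in> carrier_mat m m"
    using Uc unfolding E_def D_def by auto
  have diag: "mat_diag (Suc m) (\<lambda>i. complex_of_real (if i = 0 then r else lam (i - 1)))
      = four_block_mat E (0\<^sub>m 1 m) (0\<^sub>m m 1) D"
    unfolding E_def D_def by (rule eq_matI) (auto simp: mat_diag_def)
  have VF: "V * four_block_mat E (0\<^sub>m 1 m) (0\<^sub>m m 1) D = four_block_mat E (0\<^sub>m 1 m) (0\<^sub>m m 1) (U * D)"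
    unfolding V_def using blocks by (subst mult_four_block_mat[of _ 1 1 _ m _ m _ _ 1 _ m]) auto
  have FV: "four_block_mat E (0\<^sub>m 1 m) (0\<^sub>m m 1) (U * D) * mat_adjoint V
      = four_block_mat E (0\<^sub>m 1 m) (0\<^sub>m m 1) (U * D * mat_adjoint U)"
    unfolding V_def mat_adjoint_block_diag[OF Uc] using blocks
    by (subst mult_four_block_mat[of _ 1 1 _ m _ m _ _ 1 _ m]) auto
  show ?thesis
    unfolding diag VF FV unfolding E_def D_def ..
qed

lemma hermitian_mat_spectral:
  fixes A :: "complex mat"
  assumes "hermitian_mat n A"
  shows "\<exists>U lam. unitary_mat n U \<and> A = U * mat_diag n (\<lambda>i. complex_of_real (lam i)) * mat_adjoint U"
  using assms
proof (induction n arbitrary: A)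
  case 0
  show ?case
  proof (intro exI[of _ "1\<^sub>m 0"] exI[of _ "\<lambda>i. 0"] conjI unitary_mat_one)
    show "A = 1\<^sub>m 0 * mat_diag 0 (\<lambda>i. complex_of_real 0) * mat_adjoint (1\<^sub>m 0)"
      using 0 by (intro eq_matI) (auto simp: hermitian_mat_def)
  qed
next
  case (Suc m)
  have Ac: "A \<in> carrier_mat (Suc m) (Suc m)" using hermitian_matD[OF Suc.prems] by simp
  obtain e where "eigenvalue A e" using spectrum_non_empty[OF Ac] unfolding spectrum_def by auto
  then obtain v where v: "v \<in> carrier_vec (Suc m)" "v \<noteq> 0\<^sub>v (Suc m)" "A *\<^sub>v v = e \<cdot>\<^sub>v v"
    unfolding eigenvalue_def eigenvector_def using Ac by auto
  obtain W c where W: "unitary_mat (Suc m) W" and colW: "col W 0 = c \<cdot>\<^sub>v v"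
    using unitary_mat_first_col_exists[OF v(1,2)] by blast
  obtain r A3 where A3: "hermitian_mat m A3" and deflate:
    "mat_adjoint W * A * W = four_block_mat (mat 1 1 (\<lambda>_. complex_of_real r)) (0\<^sub>m 1 m) (0\<^sub>m m 1) A3"
    using hermitian_mat_deflation[OF Suc.prems W v(1,3) colW] by blast
  obtain U3 lam3 where U3: "unitary_mat m U3"
    and A3_eq: "A3 = U3 * mat_diag m (\<lambda>i. complex_of_real (lam3 i)) * mat_adjoint U3"
    using Suc.IH[OF A3] by blast
  define V where "V = four_block_mat (1\<^sub>m 1) (0\<^sub>m 1 m) (0\<^sub>m m 1) U3"
  define D where "D = mat_diag (Suc m) (\<lambda>i. complex_of_real (if i = 0 then r else lam3 (i - 1)))"
  have V: "unitary_mat (Suc m) V" unfolding V_def by (rule unitary_mat_block_diag[OF U3])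
  have Wc: "W \<in> carrier_mat (Suc m) (Suc m)" and Vc: "V \<in> carrier_mat (Suc m) (Suc m)"
    using W V unitary_mat_carrier by auto
  have D: "D \<in> carrier_mat (Suc m) (Suc m)" unfolding D_def by simp
  have "A = W * (mat_adjoint W * A * W) * mat_adjoint W"
    using unitary_mat_conj_cancel(2)[OF W Ac] by simp
  also have "\<dots> = W * (V * D * mat_adjoint V) * mat_adjoint W"
    unfolding deflate A3_eq four_block_mat_unitary_diag[OF U3] V_def D_def ..
  also have "\<dots> = (W * V) * D * mat_adjoint (W * V)"
    using Wc Vc D
    by (simp add: mat_adjoint_mult[OF Wc Vc] assoc_mult_mat[of _ "Suc m" "Suc m" _ "Suc m" _ "Suc m"]
        square_mult_carrier_mat)
  finally have A_eq: "A = (W * V) * D * mat_adjoint (W * V)" .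
  show ?case
    by (intro exI[of _ "W * V"] exI[of _ "\<lambda>i. if i = 0 then r else lam3 (i - 1)"] conjI
        unitary_mat_mult[OF W V] A_eq[unfolded D_def])
qed

section \<open>Traces and effects\<close>

lemma mat_trace_mult_comm:
  fixes A B :: "complex mat"
  assumes "A \<in> carrier_mat n m" "B \<in> carrier_mat m n"
  shows "mat_trace (A * B) = mat_trace (B * A)"
proof -
  have "mat_trace (A * B) = (\<Sum>i<n. \<Sum>k<m. A $$ (i, k) * B $$ (k, i))"
    using assms unfolding mat_trace_def by (auto simp: scalar_prod_def atLeast0LessThan)
  also have "\<dots> = (\<Sum>k<m. \<Sum>i<n. B $$ (k, i) * A $$ (i, k))"
    by (subst sum.swap) (simp add: mult.commute)
  also have "\<dots> = mat_trace (B * A)"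
    using assms unfolding mat_trace_def by (auto simp: scalar_prod_def atLeast0LessThan)
  finally show ?thesis .
qed

lemma mat_trace_mult_diag:
  fixes M :: "complex mat"
  assumes "M \<in> carrier_mat n n"
  shows "mat_trace (M * mat_diag n f) = (\<Sum>i<n. M $$ (i, i) * f i)"
  unfolding mat_trace_def using assms
  by (auto simp: scalar_prod_def atLeast0LessThan mat_diag_def if_distrib cong: if_cong
      intro!: sum.cong)

lemma mat_trace_mult_unitary_diag:
  fixes Q V :: "complex mat"
  assumes V: "unitary_mat n V" and Q: "Q \<in> carrier_mat n n"
  shows "mat_trace (Q * (V * mat_diag n f * mat_adjoint V))
       = (\<Sum>i<n. (mat_adjoint V * Q * V) $$ (i, i) * f i)"
proof -
  have Vc: "V \<in> carrier_mat n n" using V unitary_mat_carrier by auto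
  have D: "mat_diag n f \<in> carrier_mat n n" by simp
  have "mat_trace (Q * (V * mat_diag n f * mat_adjoint V)) = mat_trace ((Q * V * mat_diag n f) * mat_adjoint V)"
    using Q Vc D by (simp add: assoc_mult_mat[of _ n n _ n _ n] square_mult_carrier_mat)
  also have "\<dots> = mat_trace (mat_adjoint V * (Q * V * mat_diag n f))"
    using Q Vc D by (intro mat_trace_mult_comm[of _ n n]) (auto simp: square_mult_carrier_mat)
  also have "\<dots> = mat_trace ((mat_adjoint V * Q * V) * mat_diag n f)"
    using Q Vc D by (simp add: assoc_mult_mat[of _ n n _ n _ n] square_mult_carrier_mat)
  also have "\<dots> = (\<Sum>i<n. (mat_adjoint V * Q * V) $$ (i, i) * f i)"
    using Q Vc by (intro mat_trace_mult_diag) (auto simp: square_mult_carrier_mat)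
  finally show ?thesis .
qed

lemma mat_trace_add:
  "A \<in> carrier_mat n n \<Longrightarrow> B \<in> carrier_mat n n \<Longrightarrow> mat_trace (A + B) = mat_trace A + mat_trace B"
  unfolding mat_trace_def by (auto simp: sum.distrib)

lemma mat_trace_smult: "A \<in> carrier_mat n n \<Longrightarrow> mat_trace (k \<cdot>\<^sub>m A) = k * mat_trace A"
  unfolding mat_trace_def by (auto simp: sum_distrib_left)

lemma mat_trace_mult_real_combination:
  fixes Q X Y :: "complex mat"
  assumes Q: "Q \<in> carrier_mat n n" and X: "X \<in> carrier_mat n n" and Y: "Y \<in> carrier_mat n n"
  shows "Re (mat_trace (Q * (complex_of_real a \<cdot>\<^sub>m X + complex_of_real b \<cdot>\<^sub>m Y)))
       = a * Re (mat_trace (Q * X)) + b * Re (mat_trace (Q * Y))"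
proof -
  have "Q * (complex_of_real a \<cdot>\<^sub>m X + complex_of_real b \<cdot>\<^sub>m Y)
      = Q * (complex_of_real a \<cdot>\<^sub>m X) + Q * (complex_of_real b \<cdot>\<^sub>m Y)"
    using Q X Y by (intro mult_add_distrib_mat[of Q n n]) auto
  also have "\<dots> = complex_of_real a \<cdot>\<^sub>m (Q * X) + complex_of_real b \<cdot>\<^sub>m (Q * Y)"
    using mult_smult_distrib[OF Q X] mult_smult_distrib[OF Q Y] by simp
  moreover have "Q * X \<in> carrier_mat n n" "Q * Y \<in> carrier_mat n n" using Q X Y by auto
  ultimately show ?thesis by (simp add: mat_trace_add[of _ n] mat_trace_smult[of _ n])
qed

lemma diag_entry_adjoint_diag_mult:
  fixes M :: "complex mat"
  assumes M: "M \<in> carrier_mat n n" and i: "i < n"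
  shows "(mat_adjoint M * mat_diag n (\<lambda>j. complex_of_real (d j)) * M) $$ (i, i)
       = complex_of_real (\<Sum>j<n. d j * (cmod (M $$ (j, i)))\<^sup>2)"
proof -
  have "cnj z * complex_of_real r * z = complex_of_real (r * (cmod z)\<^sup>2)" for z r
    by (simp add: cnj_mult_self mult.commute mult.left_commute)
  then show ?thesis
    using M i unfolding of_real_sum
    by (auto simp: scalar_prod_def atLeast0LessThan mat_diag_def if_distrib cong: if_cong
        intro!: sum.cong)
qed

text \<open>The operators \<open>0 \<le> Q \<le> I\<close>, in spectral form.\<close>

definition effect_mat :: "nat \<Rightarrow> complex mat \<Rightarrow> bool" where
  "effect_mat n Q \<longleftrightarrow> (\<exists>U d. unitary_mat n U \<and> (\<forall>j. 0 \<le> d j \<and> d j \<le> 1) \<and>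
      Q = U * mat_diag n (\<lambda>j. complex_of_real (d j)) * mat_adjoint U)"

lemma effect_mat_carrier: "effect_mat n Q \<Longrightarrow> Q \<in> carrier_mat n n"
  unfolding effect_mat_def using unitary_mat_carrier by fastforce

lemma effect_mat_zero: "effect_mat n (0\<^sub>m n n)"
proof -
  have "0\<^sub>m n n = 1\<^sub>m n * mat_diag n (\<lambda>j. complex_of_real 0) * mat_adjoint (1\<^sub>m n :: complex mat)"
    by (rule eq_matI) (auto simp: mat_diag_def)
  then show ?thesis
    unfolding effect_mat_def using unitary_mat_one by (intro exI[of _ "1\<^sub>m n"] exI[of _ "\<lambda>j. 0"]) auto
qed

text \<open>For \<open>Q = U diag(d) U\<^sup>*\<close> the entry is \<open>\<Sum>\<^sub>j d\<^sub>j |(U\<^sup>* V)\<^sub>j\<^sub>i|\<^sup>2\<close>, a convex combination of the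
  eigenvalues \<open>d\<^sub>j\<close> since the columns of \<open>U\<^sup>* V\<close> are unit vectors.\<close>

lemma effect_mat_unitary_diag_entry:
  assumes Q: "effect_mat n Q" and V: "unitary_mat n V" and i: "i < n"
  shows "\<exists>r. (mat_adjoint V * Q * V) $$ (i, i) = complex_of_real r \<and> 0 \<le> r \<and> r \<le> 1"
proof -
  obtain U d where U: "unitary_mat n U" and d: "\<And>j. 0 \<le> d j \<and> d j \<le> 1"
    and Q_eq: "Q = U * mat_diag n (\<lambda>j. complex_of_real (d j)) * mat_adjoint U"
    using Q unfolding effect_mat_def by blast
  define M where "M = mat_adjoint U * V"
  have M: "unitary_mat n M" unfolding M_def by (rule unitary_mat_mult[OF unitary_mat_adjoint[OF U] V])
  have Uc: "U \<in> carrier_mat n n" and Vc: "V \<in> carrier_mat n n" using U V unitary_mat_carrier by auto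
  have "mat_adjoint V * Q * V = mat_adjoint M * mat_diag n (\<lambda>j. complex_of_real (d j)) * M"
    unfolding Q_eq M_def using Uc Vc
    by (simp add: mat_adjoint_mult[of _ n n _ n] assoc_mult_mat[of _ n n _ n _ n] square_mult_carrier_mat)
  then have entry: "(mat_adjoint V * Q * V) $$ (i, i) = complex_of_real (\<Sum>j<n. d j * (cmod (M $$ (j, i)))\<^sup>2)"
    using diag_entry_adjoint_diag_mult[OF unitary_mat_carrier[OF M] i] by simp
  have "(\<Sum>j<n. d j * (cmod (M $$ (j, i)))\<^sup>2) \<le> (\<Sum>j<n. (cmod (M $$ (j, i)))\<^sup>2)"
    using d by (intro sum_mono) (auto intro: mult_left_le_one_le)
  then have "(\<Sum>j<n. d j * (cmod (M $$ (j, i)))\<^sup>2) \<le> 1" unfolding unitary_mat_col_norm[OF M i] .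
  moreover have "0 \<le> (\<Sum>j<n. d j * (cmod (M $$ (j, i)))\<^sup>2)"
    using d by (intro sum_nonneg) auto
  ultimately show ?thesis using entry by blast
qed

lemma effect_mat_trace_spectral:
  assumes Q: "effect_mat n Q" and V: "unitary_mat n V"
  shows "\<exists>r. (\<forall>i<n. 0 \<le> r i \<and> r i \<le> 1) \<and>
     Re (mat_trace (Q * (V * mat_diag n (\<lambda>i. complex_of_real (lam i)) * mat_adjoint V)))
       = (\<Sum>i<n. r i * lam i)"
proof -
  define r where "r i = Re ((mat_adjoint V * Q * V) $$ (i, i))" for i
  have r: "(mat_adjoint V * Q * V) $$ (i, i) = complex_of_real (r i) \<and> 0 \<le> r i \<and> r i \<le> 1"
    if "i < n" for i
    using effect_mat_unitary_diag_entry[OF Q V that] unfolding r_def by auto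
  have "Re (mat_trace (Q * (V * mat_diag n (\<lambda>i. complex_of_real (lam i)) * mat_adjoint V)))
      = (\<Sum>i<n. r i * lam i)"
    unfolding mat_trace_mult_unitary_diag[OF V effect_mat_carrier[OF Q]] Re_sum
    using r by (intro sum.cong) auto
  then show ?thesis using r by blast
qed

lemma psd_mat_eigenvalues_nonneg:
  fixes W V :: "complex mat"
  assumes W: "psd_mat n W" and V: "unitary_mat n V"
    and W_eq: "W = V * mat_diag n (\<lambda>i. complex_of_real (lam i)) * mat_adjoint V" and i: "i < n"
  shows "0 \<le> lam i"
proof -
  have Vc: "V \<in> carrier_mat n n" using V unitary_mat_carrier by auto
  have Wc: "W \<in> carrier_mat n n" using W unfolding psd_mat_def hermitian_mat_def by auto
  have "complex_of_real (lam i) = (mat_adjoint V * W * V) $$ (i, i)"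
    unfolding W_eq unitary_mat_conj_cancel(1)[OF V mat_diag_dim] using i by (simp add: mat_diag_def)
  also have "\<dots> = row (mat_adjoint V) i \<bullet> (W *\<^sub>v col V i)"
    using Vc Wc i by (simp add: assoc_mult_mat[of _ n n _ n _ n] square_mult_carrier_mat col_mult2[OF Wc Vc i])
  also have "row (mat_adjoint V) i = conjugate (col V i)"
    using Vc i by (intro eq_vecI) auto
  finally have "lam i = Re (conjugate (col V i) \<bullet> (W *\<^sub>v col V i))" by (metis Re_complex_of_real)
  then show ?thesis using W Vc i unfolding psd_mat_def by simp
qed

lemma effect_mat_trace_psd_nonneg:
  assumes Q: "effect_mat n Q" and W: "psd_mat n W"
  shows "0 \<le> Re (mat_trace (Q * W))"
proof -
  obtain V lam where V: "unitary_mat n V"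
    and W_eq: "W = V * mat_diag n (\<lambda>i. complex_of_real (lam i)) * mat_adjoint V"
    using hermitian_mat_spectral W unfolding psd_mat_def by blast
  obtain r where "\<forall>i<n. 0 \<le> r i \<and> r i \<le> 1" and "Re (mat_trace (Q * W)) = (\<Sum>i<n. r i * lam i)"
    using effect_mat_trace_spectral[OF Q V, of lam] W_eq by auto
  then show ?thesis
    using psd_mat_eigenvalues_nonneg[OF W V W_eq] by (auto intro: sum_nonneg)
qed

section \<open>The variational formula for the tail\<close>

lemma nonneg_proj_spectral:
  fixes X :: "complex mat"
  assumes "hermitian_mat n X"
  obtains U lam where "unitary_mat n U"
    and "X = U * mat_diag n (\<lambda>i. complex_of_real (lam i)) * mat_adjoint U"
    and "nonneg_proj n X = U * mat_diag n (\<lambda>i. complex_of_real (if 0 \<le> lam i then 1 else 0)) * mat_adjoint U"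
proof -
  have "\<exists>P U lam. unitary_mat n U \<and>
      X = U * mat_diag n (\<lambda>i. complex_of_real (lam i)) * mat_adjoint U \<and>
      P = U * mat_diag n (\<lambda>i. if lam i \<ge> 0 then 1 else 0) * mat_adjoint U"
    using hermitian_mat_spectral[OF assms] by blast
  from someI_ex[OF this] show ?thesis
    using that unfolding nonneg_proj_def by (auto simp: if_distrib cong: if_cong)
qed

lemma effect_mat_nonneg_proj:
  assumes "hermitian_mat n X"
  shows "effect_mat n (nonneg_proj n X)"
proof -
  obtain U lam where U: "unitary_mat n U"
    and "X = U * mat_diag n (\<lambda>i. complex_of_real (lam i)) * mat_adjoint U"
    and P: "nonneg_proj n X
      = U * mat_diag n (\<lambda>i. complex_of_real (if 0 \<le> lam i then 1 else 0)) * mat_adjoint U"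
    by (rule nonneg_proj_spectral[OF assms])
  show ?thesis unfolding effect_mat_def
    using U P by (intro exI[of _ U] exI[of _ "\<lambda>i. if 0 \<le> lam i then 1 else 0"]) auto
qed

lemma nonneg_proj_trace_maximal:
  fixes X :: "complex mat"
  assumes X: "hermitian_mat n X" and Q: "effect_mat n Q"
  shows "Re (mat_trace (Q * X)) \<le> Re (mat_trace (nonneg_proj n X * X))"
proof -
  obtain U lam where U: "unitary_mat n U"
    and X_eq: "X = U * mat_diag n (\<lambda>i. complex_of_real (lam i)) * mat_adjoint U"
    and P_eq: "nonneg_proj n X = U * mat_diag n (\<lambda>i. complex_of_real (if 0 \<le> lam i then 1 else 0)) * mat_adjoint U"
    using nonneg_proj_spectral[OF X] by blast
  obtain r where r: "\<forall>i<n. 0 \<le> r i \<and> r i \<le> 1" and QX: "Re (mat_trace (Q * X)) = (\<Sum>i<n. r i * lam i)"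
    using effect_mat_trace_spectral[OF Q U, of lam] X_eq by auto
  have "mat_adjoint U * nonneg_proj n X * U
      = mat_diag n (\<lambda>i. complex_of_real (if 0 \<le> lam i then 1 else 0))"
    unfolding P_eq by (rule unitary_mat_conj_cancel(1)[OF U mat_diag_dim])
  then have "Re (mat_trace (nonneg_proj n X * X)) = (\<Sum>i<n. (if 0 \<le> lam i then 1 else 0) * lam i)"
    unfolding mat_trace_mult_unitary_diag[OF U effect_mat_carrier[OF effect_mat_nonneg_proj[OF X]],
        where f = "\<lambda>i. complex_of_real (lam i)", folded X_eq] Re_sum
    by (intro sum.cong) (auto simp: mat_diag_def)
  moreover have "(\<Sum>i<n. r i * lam i) \<le> (\<Sum>i<n. (if 0 \<le> lam i then 1 else 0) * lam i)"
  proof (rule sum_mono)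
    fix i assume "i \<in> {..<n}"
    then show "r i * lam i \<le> (if 0 \<le> lam i then 1 else 0) * lam i"
      using r by (auto intro: mult_left_le_one_le simp: mult_nonneg_nonpos)
  qed
  ultimately show ?thesis unfolding QX by linarith
qed

lemma tail_trace_ge_effect:
  assumes A: "hermitian_mat n A" and Q: "effect_mat n Q"
  shows "Re (mat_trace (Q * (A - complex_of_real c \<cdot>\<^sub>m 1\<^sub>m n))) \<le> tail_trace n A c"
  unfolding tail_trace_def by (rule nonneg_proj_trace_maximal[OF hermitian_mat_shift[OF A] Q])

lemma tail_trace_nonneg:
  assumes "hermitian_mat n A"
  shows "0 \<le> tail_trace n A c"
  using tail_trace_ge_effect[OF assms effect_mat_zero, of c] hermitian_matD(1)[OF assms]
  by (simp add: mat_trace_def)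

lemma tail_trace_antimono:
  assumes A: "hermitian_mat n A" and c: "c \<le> c'"
  shows "tail_trace n A c' \<le> tail_trace n A c"
proof -
  have Ac: "A \<in> carrier_mat n n" using hermitian_matD(1)[OF A] .
  define P where "P = nonneg_proj n (A - complex_of_real c' \<cdot>\<^sub>m 1\<^sub>m n)"
  have P: "effect_mat n P"
    unfolding P_def by (rule effect_mat_nonneg_proj[OF hermitian_mat_shift[OF A]])
  have "A - complex_of_real c \<cdot>\<^sub>m 1\<^sub>m n
      = complex_of_real 1 \<cdot>\<^sub>m (A - complex_of_real c' \<cdot>\<^sub>m 1\<^sub>m n) + complex_of_real (c' - c) \<cdot>\<^sub>m 1\<^sub>m n"
    using Ac by (intro eq_matI) (auto simp: algebra_simps)
  then have "Re (mat_trace (P * (A - complex_of_real c \<cdot>\<^sub>m 1\<^sub>m n)))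
      = 1 * tail_trace n A c' + (c' - c) * Re (mat_trace (P * 1\<^sub>m n))"
    unfolding tail_trace_def P_def[symmetric]
    by (simp only:, intro mat_trace_mult_real_combination) (use Ac effect_mat_carrier[OF P] in auto)
  moreover have "0 \<le> (c' - c) * Re (mat_trace (P * 1\<^sub>m n))"
    using effect_mat_trace_psd_nonneg[OF P psd_mat_one] c by simp
  ultimately show ?thesis using tail_trace_ge_effect[OF A P, of c] by linarith
qed

lemma tail_trace_mixture_le:
  assumes S: "hermitian_mat n S" and W: "hermitian_mat n W" and t: "0 \<le> t" "t \<le> 1"
  shows "tail_trace n (complex_of_real t \<cdot>\<^sub>m S + complex_of_real (1 - t) \<cdot>\<^sub>m W) c
     \<le> t * tail_trace n S c + (1 - t) * tail_trace n W c"
proof -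
  let ?R = "complex_of_real t \<cdot>\<^sub>m S + complex_of_real (1 - t) \<cdot>\<^sub>m W"
  let ?shift = "\<lambda>A. A - complex_of_real c \<cdot>\<^sub>m 1\<^sub>m n"
  have Sc: "S \<in> carrier_mat n n" and Wc: "W \<in> carrier_mat n n"
    using hermitian_matD(1) S W by auto
  define P where "P = nonneg_proj n (?shift ?R)"
  have P: "effect_mat n P" unfolding P_def
    by (intro effect_mat_nonneg_proj hermitian_mat_shift hermitian_mat_real_combination S W)
  have "?shift ?R = complex_of_real t \<cdot>\<^sub>m ?shift S + complex_of_real (1 - t) \<cdot>\<^sub>m ?shift W"
    using Sc Wc by (intro eq_matI) (auto simp: algebra_simps)
  then have "tail_trace n ?R c
      = t * Re (mat_trace (P * ?shift S)) + (1 - t) * Re (mat_trace (P * ?shift W))"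
    unfolding tail_trace_def P_def[symmetric]
    by (simp only:, intro mat_trace_mult_real_combination) (use Sc Wc effect_mat_carrier[OF P] in auto)
  also have "\<dots> \<le> t * tail_trace n S c + (1 - t) * tail_trace n W c"
    using tail_trace_ge_effect[OF S P, of c] tail_trace_ge_effect[OF W P, of c] t
    by (intro add_mono mult_left_mono) auto
  finally show ?thesis .
qed

lemma tail_trace_mixture_ge:
  assumes S: "hermitian_mat n S" and W: "psd_mat n W" and t: "0 < t" "t \<le> 1"
  shows "t * tail_trace n S (c / t)
     \<le> tail_trace n (complex_of_real t \<cdot>\<^sub>m S + complex_of_real (1 - t) \<cdot>\<^sub>m W) c"
proof -
  let ?R = "complex_of_real t \<cdot>\<^sub>m S + complex_of_real (1 - t) \<cdot>\<^sub>m W"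
  have Wh: "hermitian_mat n W" using W unfolding psd_mat_def by simp
  have Sc: "S \<in> carrier_mat n n" and Wc: "W \<in> carrier_mat n n"
    using hermitian_matD(1) S Wh by auto
  define P where "P = nonneg_proj n (S - complex_of_real (c / t) \<cdot>\<^sub>m 1\<^sub>m n)"
  have P: "effect_mat n P"
    unfolding P_def by (rule effect_mat_nonneg_proj[OF hermitian_mat_shift[OF S]])
  have "?R - complex_of_real c \<cdot>\<^sub>m 1\<^sub>m n
      = complex_of_real t \<cdot>\<^sub>m (S - complex_of_real (c / t) \<cdot>\<^sub>m 1\<^sub>m n) + complex_of_real (1 - t) \<cdot>\<^sub>m W"
    using Sc Wc t by (intro eq_matI) (auto simp: algebra_simps)
  then have "Re (mat_trace (P * (?R - complex_of_real c \<cdot>\<^sub>m 1\<^sub>m n)))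
      = t * tail_trace n S (c / t) + (1 - t) * Re (mat_trace (P * W))"
    unfolding tail_trace_def P_def[symmetric]
    by (simp only:, intro mat_trace_mult_real_combination) (use Sc Wc effect_mat_carrier[OF P] in auto)
  moreover have "0 \<le> (1 - t) * Re (mat_trace (P * W))"
    using effect_mat_trace_psd_nonneg[OF P W] t by simp
  ultimately show ?thesis
    using tail_trace_ge_effect[OF hermitian_mat_real_combination[OF S Wh, of t "1 - t"] P, of c] by linarith
qed

section \<open>Admissible rates\<close>

lemma limsup_ereal_eq_0_iff:
  fixes f :: "nat \<Rightarrow> real"
  assumes nonneg: "\<And>n. 0 \<le> f n"
  shows "limsup (\<lambda>n. ereal (f n)) = 0 \<longleftrightarrow> f \<longlonglongrightarrow> 0"
proof
  assume L: "limsup (\<lambda>n. ereal (f n)) = 0"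
  have "0 \<le> liminf (\<lambda>n. ereal (f n))" using nonneg by (intro Liminf_bounded) auto
  moreover have "liminf (\<lambda>n. ereal (f n)) \<le> limsup (\<lambda>n. ereal (f n))" by (rule Liminf_le_Limsup) simp
  ultimately have "liminf (\<lambda>n. ereal (f n)) = 0" using L by simp
  then have "(\<lambda>n. ereal (f n)) \<longlonglongrightarrow> ereal 0"
    using L tendsto_iff_Liminf_eq_Limsup[of sequentially "\<lambda>n. ereal (f n)" "ereal 0"]
    by (simp add: zero_ereal_def)
  then show "f \<longlonglongrightarrow> 0" by simp
next
  assume "f \<longlonglongrightarrow> 0"
  then have "(\<lambda>n. ereal (f n)) \<longlonglongrightarrow> ereal 0" by simp
  then show "limsup (\<lambda>n. ereal (f n)) = 0" by (simp add: lim_imp_Limsup zero_ereal_def)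
qed

definition vanishing_tail_rates :: "(nat \<Rightarrow> nat) \<Rightarrow> (nat \<Rightarrow> complex mat) \<Rightarrow> real set" where
  "vanishing_tail_rates d \<tau> = {\<gamma>. (\<lambda>n. tail_trace (d n) (\<tau> n) (exp (- real n * \<gamma>))) \<longlonglongrightarrow> 0}"

lemma spectral_inf_entropy_rate_eq_Sup:
  assumes "\<And>n. hermitian_mat (d n) (\<tau> n)"
  shows "spectral_inf_entropy_rate d \<tau> = Sup (ereal ` vanishing_tail_rates d \<tau>)"
  unfolding spectral_inf_entropy_rate_def vanishing_tail_rates_def
  using limsup_ereal_eq_0_iff[OF tail_trace_nonneg[OF assms]] by (auto intro!: arg_cong[of _ _ Sup])

lemma vanishing_tail_rates_down_closed:
  assumes herm: "\<And>n. hermitian_mat (d n) (\<tau> n)"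
    and \<gamma>: "\<gamma> \<in> vanishing_tail_rates d \<tau>" and le: "\<gamma>' \<le> \<gamma>"
  shows "\<gamma>' \<in> vanishing_tail_rates d \<tau>"
  unfolding vanishing_tail_rates_def mem_Collect_eq
proof (rule tendsto_sandwich[OF _ _ tendsto_const \<gamma>[unfolded vanishing_tail_rates_def mem_Collect_eq]])
  have "exp (- real n * \<gamma>) \<le> exp (- real n * \<gamma>')" for n using le by (simp add: mult_left_mono)
  then show "\<forall>\<^sub>F n in sequentially. tail_trace (d n) (\<tau> n) (exp (- real n * \<gamma>'))
      \<le> tail_trace (d n) (\<tau> n) (exp (- real n * \<gamma>))"
    using tail_trace_antimono[OF herm] by auto
qed (use tail_trace_nonneg[OF herm] in auto)

lemma vanishing_tail_rates_mixture:
  assumes \<sigma>: "\<And>n. hermitian_mat (d n) (\<sigma> n)" and \<omega>: "\<And>n. hermitian_mat (d n) (\<omega> n)"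
    and t: "0 \<le> t" "t \<le> 1"
    and \<gamma>: "\<gamma> \<in> vanishing_tail_rates d \<sigma>" "\<gamma> \<in> vanishing_tail_rates d \<omega>"
  shows "\<gamma> \<in> vanishing_tail_rates d (\<lambda>n. complex_of_real t \<cdot>\<^sub>m \<sigma> n + complex_of_real (1 - t) \<cdot>\<^sub>m \<omega> n)"
  unfolding vanishing_tail_rates_def mem_Collect_eq
proof (rule tendsto_sandwich[OF _ _ tendsto_const])
  show "(\<lambda>n. t * tail_trace (d n) (\<sigma> n) (exp (- real n * \<gamma>))
        + (1 - t) * tail_trace (d n) (\<omega> n) (exp (- real n * \<gamma>))) \<longlonglongrightarrow> 0"
    using \<gamma> unfolding vanishing_tail_rates_def by (auto intro!: tendsto_add_zero tendsto_mult_right_zero)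
qed (use tail_trace_mixture_le[OF \<sigma> \<omega> t]
       tail_trace_nonneg[OF hermitian_mat_real_combination[OF \<sigma> \<omega>, where a = t and b = "1 - t"]]
     in auto)

lemma eventually_exp_div_le:
  assumes t: "0 < t" and lt: "\<gamma>' < \<gamma>"
  shows "\<forall>\<^sub>F n in sequentially. exp (- real n * \<gamma>) / t \<le> exp (- real n * \<gamma>')"
proof -
  obtain N :: nat where N: "- ln t / (\<gamma> - \<gamma>') \<le> real N" using real_arch_simple by blast
  have "exp (- real n * \<gamma>) / t \<le> exp (- real n * \<gamma>')" if n: "N \<le> n" for n
  proof -
    have "- ln t = (- ln t / (\<gamma> - \<gamma>')) * (\<gamma> - \<gamma>')" using lt by simp
    also have "\<dots> \<le> real n * (\<gamma> - \<gamma>')"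
      using N n lt by (intro mult_right_mono) auto
    finally have "exp (- real n * \<gamma> - ln t) \<le> exp (- real n * \<gamma>')" by (simp add: algebra_simps)
    then show ?thesis using t by (simp add: exp_diff)
  qed
  then show ?thesis unfolding eventually_sequentially by blast
qed

lemma vanishing_tail_rates_mixture_component:
  assumes \<sigma>: "\<And>n. hermitian_mat (d n) (\<sigma> n)" and \<omega>: "\<And>n. psd_mat (d n) (\<omega> n)"
    and t: "0 < t" "t \<le> 1"
    and \<gamma>: "\<gamma> \<in> vanishing_tail_rates d (\<lambda>n. complex_of_real t \<cdot>\<^sub>m \<sigma> n + complex_of_real (1 - t) \<cdot>\<^sub>m \<omega> n)"
    and lt: "\<gamma>' < \<gamma>"
  shows "\<gamma>' \<in> vanishing_tail_rates d \<sigma>"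
proof -
  let ?T = "\<lambda>n. tail_trace (d n) (complex_of_real t \<cdot>\<^sub>m \<sigma> n + complex_of_real (1 - t) \<cdot>\<^sub>m \<omega> n)
    (exp (- real n * \<gamma>))"
  have lim: "(\<lambda>n. ?T n / t) \<longlonglongrightarrow> 0"
    using \<gamma> unfolding vanishing_tail_rates_def by (auto intro: tendsto_divide_zero)
  have upper: "tail_trace (d n) (\<sigma> n) (exp (- real n * \<gamma>')) \<le> ?T n / t"
    if "exp (- real n * \<gamma>) / t \<le> exp (- real n * \<gamma>')" for n
  proof -
    have "t * tail_trace (d n) (\<sigma> n) (exp (- real n * \<gamma>'))
        \<le> t * tail_trace (d n) (\<sigma> n) (exp (- real n * \<gamma>) / t)"
      using tail_trace_antimono[OF \<sigma> that] t by simp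
    also have "\<dots> \<le> ?T n" by (rule tail_trace_mixture_ge[OF \<sigma> \<omega> t])
    finally show ?thesis using t by (simp add: le_divide_eq mult.commute)
  qed
  show ?thesis
    unfolding vanishing_tail_rates_def mem_Collect_eq
  proof (rule tendsto_sandwich[OF _ _ tendsto_const lim])
    show "\<forall>\<^sub>F n in sequentially. tail_trace (d n) (\<sigma> n) (exp (- real n * \<gamma>')) \<le> ?T n / t"
      using eventually_exp_div_le[OF t(1) lt] by (rule eventually_mono) (rule upper)
  qed (use tail_trace_nonneg[OF \<sigma>] in simp)
qed

lemma vanishing_tail_rates_mixture_below:
  assumes \<sigma>: "\<And>n. psd_mat (d n) (\<sigma> n)" and \<omega>: "\<And>n. psd_mat (d n) (\<omega> n)"
    and t: "0 < t" "t < 1"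
    and \<gamma>: "\<gamma> \<in> vanishing_tail_rates d (\<lambda>n. complex_of_real t \<cdot>\<^sub>m \<sigma> n + complex_of_real (1 - t) \<cdot>\<^sub>m \<omega> n)"
    and lt: "\<gamma>' < \<gamma>"
  shows "\<gamma>' \<in> vanishing_tail_rates d \<sigma> \<inter> vanishing_tail_rates d \<omega>"
proof -
  have herm: "hermitian_mat (d n) (\<sigma> n)" "hermitian_mat (d n) (\<omega> n)" for n
    using \<sigma> \<omega> unfolding psd_mat_def by auto
  have swap: "(\<lambda>n. complex_of_real t \<cdot>\<^sub>m \<sigma> n + complex_of_real (1 - t) \<cdot>\<^sub>m \<omega> n)
      = (\<lambda>n. complex_of_real (1 - t) \<cdot>\<^sub>m \<omega> n + complex_of_real (1 - (1 - t)) \<cdot>\<^sub>m \<sigma> n)"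
  proof (rule ext)
    fix n
    show "complex_of_real t \<cdot>\<^sub>m \<sigma> n + complex_of_real (1 - t) \<cdot>\<^sub>m \<omega> n
        = complex_of_real (1 - t) \<cdot>\<^sub>m \<omega> n + complex_of_real (1 - (1 - t)) \<cdot>\<^sub>m \<sigma> n"
      using hermitian_matD(1)[OF herm(1)] hermitian_matD(1)[OF herm(2)]
      by (simp add: comm_add_mat[of _ "d n" "d n"])
  qed
  show ?thesis
    using vanishing_tail_rates_mixture_component[of d \<sigma> \<omega> t, OF herm(1) \<omega>]
      vanishing_tail_rates_mixture_component[of d \<omega> \<sigma> "1 - t", OF herm(2) \<sigma>, folded swap]
      \<gamma> lt t by auto
qed

lemma Sup_ereal_le_if_strictly_below:
  assumes "\<And>\<gamma> \<gamma>'. \<gamma> \<in> A \<Longrightarrow> \<gamma>' < \<gamma> \<Longrightarrow> \<gamma>' \<in> B"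
  shows "Sup (ereal ` A) \<le> Sup (ereal ` B)"
proof (rule Sup_least, rule ccontr)
  fix x assume "x \<in> ereal ` A" and "\<not> x \<le> Sup (ereal ` B)"
  then obtain \<gamma> where "\<gamma> \<in> A" and "Sup (ereal ` B) < ereal \<gamma>" by auto
  moreover from this obtain z where "Sup (ereal ` B) < ereal z" "z < \<gamma>"
    using ereal_dense2 by (metis less_ereal.simps(1))
  ultimately show False using assms by (metis Sup_upper image_eqI not_le)
qed

lemma Sup_ereal_Int_down_closed:
  assumes A: "\<And>a b. b \<in> A \<Longrightarrow> a \<le> b \<Longrightarrow> a \<in> A" and B: "\<And>a b. b \<in> B \<Longrightarrow> a \<le> b \<Longrightarrow> a \<in> B"
  shows "Sup (ereal ` (A \<inter> B)) = min (Sup (ereal ` A)) (Sup (ereal ` B))"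
proof (rule antisym)
  show "Sup (ereal ` (A \<inter> B)) \<le> min (Sup (ereal ` A)) (Sup (ereal ` B))"
    by (auto intro: Sup_subset_mono)
  show "min (Sup (ereal ` A)) (Sup (ereal ` B)) \<le> Sup (ereal ` (A \<inter> B))"
  proof (rule ccontr)
    assume "\<not> ?thesis"
    then obtain z where z: "Sup (ereal ` (A \<inter> B)) < ereal z"
      "ereal z < min (Sup (ereal ` A)) (Sup (ereal ` B))"
      using ereal_dense2 not_le by metis
    then have "z \<in> A" "z \<in> B"
      using A B by (auto simp: less_Sup_iff less_imp_le)
    then show False using z(1) by (metis IntI Sup_upper image_eqI not_le)
  qed
qed

theorem mainTheorem6:
  fixes d :: "nat \<Rightarrow> nat" and \<sigma> \<omega> :: "nat \<Rightarrow> complex mat" and t :: real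
  assumes "quantum_source d \<sigma>" and "quantum_source d \<omega>"
    and "0 < t" and "t < 1"
  shows "spectral_inf_entropy_rate d
           (\<lambda>n. complex_of_real t \<cdot>\<^sub>m \<sigma> n + complex_of_real (1 - t) \<cdot>\<^sub>m \<omega> n)
         = min (spectral_inf_entropy_rate d \<sigma>) (spectral_inf_entropy_rate d \<omega>)"
proof -
  let ?\<rho> = "\<lambda>n. complex_of_real t \<cdot>\<^sub>m \<sigma> n + complex_of_real (1 - t) \<cdot>\<^sub>m \<omega> n"
  let ?R = "vanishing_tail_rates d"
  have psd: "psd_mat (d n) (\<sigma> n)" "psd_mat (d n) (\<omega> n)" for n
    using assms(1,2) unfolding quantum_source_def density_mat_def by auto
  then have herm: "hermitian_mat (d n) (\<sigma> n)" "hermitian_mat (d n) (\<omega> n)" for n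
    unfolding psd_mat_def by auto
  have herm_\<rho>: "hermitian_mat (d n) (?\<rho> n)" for n
    by (rule hermitian_mat_real_combination[OF herm])
  have "?R \<sigma> \<inter> ?R \<omega> \<subseteq> ?R ?\<rho>"
    using vanishing_tail_rates_mixture[of d \<sigma> \<omega> t, OF herm] assms(3,4) by auto
  moreover have "\<gamma>' \<in> ?R \<sigma> \<inter> ?R \<omega>" if "\<gamma> \<in> ?R ?\<rho>" "\<gamma>' < \<gamma>" for \<gamma> \<gamma>'
    by (rule vanishing_tail_rates_mixture_below[of d \<sigma> \<omega> t, OF psd assms(3,4) that])
  ultimately have "Sup (ereal ` ?R ?\<rho>) = Sup (ereal ` (?R \<sigma> \<inter> ?R \<omega>))"
    by (intro antisym Sup_subset_mono Sup_ereal_le_if_strictly_below image_mono) auto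
  also have "\<dots> = min (Sup (ereal ` ?R \<sigma>)) (Sup (ereal ` ?R \<omega>))"
    using vanishing_tail_rates_down_closed[of d \<sigma>] vanishing_tail_rates_down_closed[of d \<omega>] herm
    by (intro Sup_ereal_Int_down_closed) blast+
  finally show ?thesis
    by (simp only: spectral_inf_entropy_rate_eq_Sup[of d, OF herm(1)]
        spectral_inf_entropy_rate_eq_Sup[of d, OF herm(2)] spectral_inf_entropy_rate_eq_Sup[of d, OF herm_\<rho>])
qed

end
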